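(* Let $G$ be a finite $p$-group, $N$ a normal subgroup, $k=\mathbb F_p$ and $n\ge 0$. Then $$\Lambda^n_N:\frac{\mathcal I(N)kG}{\mathcal I(N)\mathcal I(G)}\to\frac{\mathcal I(N)^{p^n}kG}{\mathcal J^{p^n}(N,G)},\qquad x+\mathcal I(N)\mathcal I(G)\mapsto x^{p^n}+\mathcal J^{p^n}(N,G)$$ is a well defined map.
   Context: $\mathcal I(X)$ is the augmentation ideal of $kX$, viewed inside $kG$. The ideals $\mathcal J^n(N,G)$ of $kG$ are defined by $\mathcal J^1(N,G)=\mathcal I(N)\mathcal I(G)$ and $\mathcal J^{n+1}(N,G)=\mathcal I(N)\mathcal J^n(N,G)+\mathcal J^n(N,G)\mathcal I(N)$; equivalently $\mathcal J^n(N,G)=\mathcal I(N)^n\mathcal I(G)+\sum_{i=1}^{n-1}\mathcal I(N)^{n-i}\mathcal I(G)\mathcal I(N)^i$. *)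

theory Defs
  imports "HOL-Algebra.Algebra" "HOL-Library.Function_Algebras"
begin

text \<open>The group algebra kG of a finite group G over a field k: functions
carrier G -> k (zero outside the carrier), with pointwise addition and
convolution product.\<close>

definition grpalg :: "('g, 'b) monoid_scheme \<Rightarrow> ('g \<Rightarrow> 'k::field) set" where
  "grpalg G = {f. \<forall>x. x \<notin> carrier G \<longrightarrow> f x = 0}"

definition conv :: "('g, 'b) monoid_scheme \<Rightarrow> ('g \<Rightarrow> 'k::field) \<Rightarrow> ('g \<Rightarrow> 'k) \<Rightarrow> ('g \<Rightarrow> 'k)" where
  "conv G f h = (\<lambda>x. if x \<in> carrier G
      then sum (\<lambda>y. f y * h (inv\<^bsub>G\<^esub> y \<otimes>\<^bsub>G\<^esub> x)) (carrier G) else 0)"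

definition gone :: "('g, 'b) monoid_scheme \<Rightarrow> ('g \<Rightarrow> 'k::field)" where
  "gone G = (\<lambda>x. if x = \<one>\<^bsub>G\<^esub> then 1 else 0)"

primrec gapow :: "('g, 'b) monoid_scheme \<Rightarrow> ('g \<Rightarrow> 'k::field) \<Rightarrow> nat \<Rightarrow> ('g \<Rightarrow> 'k)" where
  "gapow G f 0 = gone G"
| "gapow G f (Suc m) = conv G f (gapow G f m)"

inductive_set kspan :: "('g \<Rightarrow> 'k::field) set \<Rightarrow> ('g \<Rightarrow> 'k) set" for S where
  zero: "0 \<in> kspan S"
| base: "s \<in> S \<Longrightarrow> s \<in> kspan S"
| add: "a \<in> kspan S \<Longrightarrow> b \<in> kspan S \<Longrightarrow> a + b \<in> kspan S"
| smult: "a \<in> kspan S \<Longrightarrow> (\<lambda>x. c * a x) \<in> kspan S"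

definition setmul :: "('g, 'b) monoid_scheme \<Rightarrow> ('g \<Rightarrow> 'k::field) set \<Rightarrow> ('g \<Rightarrow> 'k) set \<Rightarrow> ('g \<Rightarrow> 'k) set" where
  "setmul G A B = kspan {conv G a b | a b. a \<in> A \<and> b \<in> B}"

definition setadd :: "('g \<Rightarrow> 'k::field) set \<Rightarrow> ('g \<Rightarrow> 'k) set \<Rightarrow> ('g \<Rightarrow> 'k) set" where
  "setadd A B = {a + b | a b. a \<in> A \<and> b \<in> B}"

text \<open>Augmentation ideal I(X) of kX, viewed inside kG.\<close>
definition augI :: "('g \<Rightarrow> 'k::field) itself \<Rightarrow> 'g set \<Rightarrow> ('g \<Rightarrow> 'k) set" where
  "augI t S = {f. (\<forall>x. x \<notin> S \<longrightarrow> f x = 0) \<and> sum f S = 0}"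

text \<open>Powers A^m for m >= 1 (A^0 is taken to be kG; it is never used below).\<close>
fun setpow :: "('g, 'b) monoid_scheme \<Rightarrow> ('g \<Rightarrow> 'k::field) set \<Rightarrow> nat \<Rightarrow> ('g \<Rightarrow> 'k) set" where
  "setpow G A 0 = grpalg G"
| "setpow G A (Suc 0) = A"
| "setpow G A (Suc (Suc m)) = setmul G A (setpow G A (Suc m))"

text \<open>J^m(N,G) for m >= 1: J^1 = I(N)I(G), J^(m+1) = I(N)J^m + J^m I(N).
  (J^0 is set to kG; never used.)\<close>
fun Jideal :: "('g, 'b) monoid_scheme \<Rightarrow> 'g set \<Rightarrow> ('g \<Rightarrow> 'k::field) itself \<Rightarrow> nat \<Rightarrow> ('g \<Rightarrow> 'k) set" where
  "Jideal G N t 0 = grpalg G"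
| "Jideal G N t (Suc 0) = setmul G (augI t N) (augI t (carrier G))"
| "Jideal G N t (Suc (Suc m)) =
     setadd (setmul G (augI t N) (Jideal G N t (Suc m)))
            (setmul G (Jideal G N t (Suc m)) (augI t N))"

end

theory Submission
  imports Defs
begin

text \<open>For \<open>x, y \<in> I(N)kG\<close> with \<open>x - y \<in> I(N)I(G)\<close> and every \<open>m \<ge> 1\<close> one has
  \<open>x^m \<in> I(N)^m kG\<close> and \<open>x^m - y^m \<in> J^m(N,G)\<close>, by induction on \<open>m\<close> using
  \<open>x^(m+1) - y^(m+1) = x (x^m - y^m) + (x - y) y^m\<close>. Besides associativity of products of subspaces, the induction
  needs: \<open>kG I(N) = I(N) kG\<close>, since \<open>g I(N) = (g I(N) g\<^sup>-\<^sup>1) g\<close> and conjugation preserves \<open>I(N)\<close>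
  for normal \<open>N\<close>; \<open>I(G)\<close> and every \<open>J^k(N,G)\<close> are two-sided ideals; and
  \<open>J^k(N,G) I(N)^m kG \<subseteq> J^(k+m)(N,G)\<close>.\<close>

definition ksubspace :: "('g \<Rightarrow> 'k::field) set \<Rightarrow> bool" where
  "ksubspace V \<longleftrightarrow> 0 \<in> V \<and> (\<forall>a\<in>V. \<forall>b\<in>V. a + b \<in> V) \<and> (\<forall>a\<in>V. \<forall>c. (\<lambda>x. c * a x) \<in> V)"

lemma ksubspace_kspan: "ksubspace (kspan S)"
  unfolding ksubspace_def by (auto intro: kspan.intros)

lemma kspan_subset:
  assumes "ksubspace V" "S \<subseteq> V"
  shows "kspan S \<subseteq> V"
proof
  fix x assume "x \<in> kspan S"
  then show "x \<in> V"
    by induct (use assms in \<open>unfold ksubspace_def, blast+\<close>)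
qed

lemma ksubspace_add: "ksubspace V \<Longrightarrow> a \<in> V \<Longrightarrow> b \<in> V \<Longrightarrow> a + b \<in> V"
  unfolding ksubspace_def by blast

lemma ksubspace_smult: "ksubspace V \<Longrightarrow> a \<in> V \<Longrightarrow> (\<lambda>x. c * a x) \<in> V"
  unfolding ksubspace_def by blast

lemma setadd_memI: "a \<in> A \<Longrightarrow> b \<in> B \<Longrightarrow> a + b \<in> setadd A B"
  unfolding setadd_def by blast

lemma ksubspace_setadd:
  assumes A: "ksubspace A" and B: "ksubspace B"
  shows "ksubspace (setadd A B)"
proof -
  have "0 \<in> setadd A B"
    using setadd_memI[of 0 A 0 B] A B by (simp add: ksubspace_def)
  moreover have "x + y \<in> setadd A B" if "x \<in> setadd A B" "y \<in> setadd A B" for x y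
  proof -
    from that obtain a b a' b' where "x = a + b" "y = a' + b'" "a \<in> A" "b \<in> B" "a' \<in> A" "b' \<in> B"
      unfolding setadd_def by blast
    moreover from this have "a + a' \<in> A" "b + b' \<in> B"
      using A B by (simp_all add: ksubspace_add)
    ultimately show ?thesis
      using setadd_memI[of "a + a'" A "b + b'" B] by (simp add: ac_simps)
  qed
  moreover have "(\<lambda>z. c * x z) \<in> setadd A B" if "x \<in> setadd A B" for x c
  proof -
    from that obtain a b where "x = a + b" "a \<in> A" "b \<in> B"
      unfolding setadd_def by blast
    moreover from this have "(\<lambda>z. c * a z) \<in> A" "(\<lambda>z. c * b z) \<in> B"
      using A B by (simp_all add: ksubspace_smult)
    ultimately show ?thesis
      using setadd_memI[of "\<lambda>z. c * a z" A "\<lambda>z. c * b z" B] by (simp add: plus_fun_def distrib_left)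
  qed
  ultimately show ?thesis
    unfolding ksubspace_def by blast
qed

lemma setadd_mono: "A \<subseteq> A' \<Longrightarrow> B \<subseteq> B' \<Longrightarrow> setadd A B \<subseteq> setadd A' B'"
  unfolding setadd_def by blast

lemma setadd_upper_left: "0 \<in> B \<Longrightarrow> A \<subseteq> setadd A B"
  using setadd_memI[of _ A 0 B] by force

lemma setadd_upper_right: "0 \<in> A \<Longrightarrow> B \<subseteq> setadd A B"
  using setadd_memI[of 0 A _ B] by force

lemma conv_add_left: "conv G (a + b) c = conv G a c + conv G b c"
  by (rule ext) (simp add: conv_def distrib_right sum.distrib)

lemma conv_add_right: "conv G a (b + c) = conv G a b + conv G a c"
  by (rule ext) (simp add: conv_def distrib_left sum.distrib)

lemma conv_diff_left: "conv G (a - b) c = conv G a c - conv G b c"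
  by (rule ext) (simp add: conv_def left_diff_distrib sum_subtractf)

lemma conv_diff_right: "conv G a (b - c) = conv G a b - conv G a c"
  by (rule ext) (simp add: conv_def right_diff_distrib sum_subtractf)

lemma conv_smult_left: "conv G (\<lambda>x. c * a x) b = (\<lambda>x. c * conv G a b x)"
  by (rule ext) (simp add: conv_def sum_distrib_left mult.assoc)

lemma conv_smult_right: "conv G a (\<lambda>x. c * b x) = (\<lambda>x. c * conv G a b x)"
  by (rule ext) (simp add: conv_def sum_distrib_left mult.left_commute)

lemma conv_zero_left: "conv G 0 b = 0"
  by (rule ext) (simp add: conv_def)

lemma conv_zero_right: "conv G a 0 = 0"
  by (rule ext) (simp add: conv_def)

lemma conv_outside_carrier: "x \<notin> carrier G \<Longrightarrow> conv G f h x = 0"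
  by (simp add: conv_def)

lemma conv_kspan_left:
  assumes "x \<in> kspan S" "ksubspace V" "\<And>s. s \<in> S \<Longrightarrow> conv G s y \<in> V"
  shows "conv G x y \<in> V"
proof -
  have "ksubspace {x. conv G x y \<in> V}"
    using assms(2) by (simp add: ksubspace_def conv_add_left conv_smult_left conv_zero_left)
  then have "kspan S \<subseteq> {x. conv G x y \<in> V}"
    using assms(3) by (intro kspan_subset) auto
  with assms(1) show ?thesis by blast
qed

lemma conv_kspan_right:
  assumes "y \<in> kspan T" "ksubspace V" "\<And>u. u \<in> T \<Longrightarrow> conv G x u \<in> V"
  shows "conv G x y \<in> V"
proof -
  have "ksubspace {y. conv G x y \<in> V}"
    using assms(2) by (simp add: ksubspace_def conv_add_right conv_smult_right conv_zero_right)
  then have "kspan T \<subseteq> {y. conv G x y \<in> V}"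
    using assms(3) by (intro kspan_subset) auto
  with assms(1) show ?thesis by blast
qed

lemma ksubspace_setmul: "ksubspace (setmul G A B)"
  unfolding setmul_def by (rule ksubspace_kspan)

lemma setmul_memI: "a \<in> A \<Longrightarrow> b \<in> B \<Longrightarrow> conv G a b \<in> setmul G A B"
  unfolding setmul_def by (rule kspan.base) blast

lemma setmul_subset:
  "ksubspace V \<Longrightarrow> (\<And>a b. a \<in> A \<Longrightarrow> b \<in> B \<Longrightarrow> conv G a b \<in> V) \<Longrightarrow> setmul G A B \<subseteq> V"
  unfolding setmul_def by (rule kspan_subset) auto

lemma setmul_mono: "A \<subseteq> A' \<Longrightarrow> B \<subseteq> B' \<Longrightarrow> setmul G A B \<subseteq> setmul G A' B'"
  by (rule setmul_subset[OF ksubspace_setmul]) (auto intro: setmul_memI)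

lemma setmul_setadd_right_subset:
  "setmul G C (setadd A B) \<subseteq> setadd (setmul G C A) (setmul G C B)"
  by (rule setmul_subset[OF ksubspace_setadd[OF ksubspace_setmul ksubspace_setmul]])
     (auto simp: setadd_def[of A B] conv_add_right intro!: setadd_memI setmul_memI)

lemma setmul_setadd_left_subset:
  "setmul G (setadd A B) C \<subseteq> setadd (setmul G A C) (setmul G B C)"
  by (rule setmul_subset[OF ksubspace_setadd[OF ksubspace_setmul ksubspace_setmul]])
     (auto simp: setadd_def[of A B] conv_add_left intro!: setadd_memI setmul_memI)

lemma conv_mem_grpalg: "conv G a b \<in> grpalg G"
  by (simp add: grpalg_def conv_def)

lemma ksubspace_grpalg: "ksubspace (grpalg G)"
  unfolding ksubspace_def grpalg_def by auto

lemma ksubspace_augI: "ksubspace (augI t S)"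
  unfolding ksubspace_def augI_def by (auto simp: sum.distrib sum_distrib_left[symmetric])

lemma setmul_subset_grpalg: "setmul G A B \<subseteq> grpalg G"
  by (rule setmul_subset[OF ksubspace_grpalg conv_mem_grpalg])

context group
begin

lemma conv_assoc: "conv G (conv G a b) c = conv G a (conv G b c)"
proof (rule ext)
  fix x
  show "conv G (conv G a b) c x = conv G a (conv G b c) x"
  proof (cases "x \<in> carrier G")
    case False
    then show ?thesis
      by (simp add: conv_outside_carrier)
  next
    case True
    have "conv G (conv G a b) c x
        = (\<Sum>y\<in>carrier G. \<Sum>z\<in>carrier G. a z * b (inv z \<otimes> y) * c (inv y \<otimes> x))"
      using True by (simp add: conv_def sum_distrib_right)
    also have "\<dots> = (\<Sum>z\<in>carrier G. \<Sum>y\<in>carrier G. a z * b (inv z \<otimes> y) * c (inv y \<otimes> x))"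
      by (rule sum.swap)
    also have "\<dots> = (\<Sum>z\<in>carrier G. \<Sum>w\<in>carrier G. a z * b w * c (inv w \<otimes> (inv z \<otimes> x)))"
    proof (rule sum.cong[OF refl])
      fix z assume z: "z \<in> carrier G"
      have cancel: "u \<otimes> z \<otimes> inv z \<otimes> x = u \<otimes> x" if "u \<in> carrier G" for u
        using z that True by (simp add: m_assoc)
      show "(\<Sum>y\<in>carrier G. a z * b (inv z \<otimes> y) * c (inv y \<otimes> x))
          = (\<Sum>w\<in>carrier G. a z * b w * c (inv w \<otimes> (inv z \<otimes> x)))"
        by (rule sum.reindex_bij_witness[of _ "\<lambda>w. z \<otimes> w" "\<lambda>y. inv z \<otimes> y"])
           (use z True in \<open>auto simp: m_assoc[symmetric] inv_mult_group cancel\<close>)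
    qed
    also have "\<dots> = conv G a (conv G b c) x"
      using True by (simp add: conv_def sum_distrib_left mult.assoc)
    finally show ?thesis .
  qed
qed

lemma setmul_assoc: "setmul G (setmul G A B) C = setmul G A (setmul G B C)"
proof
  show "setmul G (setmul G A B) C \<subseteq> setmul G A (setmul G B C)"
  proof (rule setmul_subset[OF ksubspace_setmul])
    fix u c assume u: "u \<in> setmul G A B" and c: "c \<in> C"
    show "conv G u c \<in> setmul G A (setmul G B C)"
      by (rule conv_kspan_left[OF u[unfolded setmul_def] ksubspace_setmul])
         (use c in \<open>clarsimp simp: conv_assoc setmul_memI\<close>)
  qed
  show "setmul G A (setmul G B C) \<subseteq> setmul G (setmul G A B) C"
  proof (rule setmul_subset[OF ksubspace_setmul])
    fix a u assume a: "a \<in> A" and u: "u \<in> setmul G B C"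
    show "conv G a u \<in> setmul G (setmul G A B) C"
      by (rule conv_kspan_right[OF u[unfolded setmul_def] ksubspace_setmul])
         (use a in \<open>clarsimp simp: conv_assoc[symmetric] setmul_memI\<close>)
  qed
qed

lemma sum_conv: "(\<Sum>x\<in>carrier G. conv G f h x) = (\<Sum>y\<in>carrier G. f y) * (\<Sum>z\<in>carrier G. h z)"
proof -
  have "(\<Sum>x\<in>carrier G. conv G f h x) = (\<Sum>y\<in>carrier G. f y * (\<Sum>x\<in>carrier G. h (inv y \<otimes> x)))"
    unfolding conv_def by (simp add: sum_distrib_left) (rule sum.swap)
  also have "\<dots> = (\<Sum>y\<in>carrier G. f y * (\<Sum>z\<in>carrier G. h z))"
  proof (rule sum.cong[OF refl])
    fix y assume y: "y \<in> carrier G"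
    have "(\<Sum>x\<in>carrier G. h (inv y \<otimes> x)) = (\<Sum>z\<in>carrier G. h z)"
      by (rule sum.reindex_bij_witness[of _ "\<lambda>z. y \<otimes> z" "\<lambda>x. inv y \<otimes> x"])
         (use y in \<open>auto simp: m_assoc[symmetric]\<close>)
    then show "f y * (\<Sum>x\<in>carrier G. h (inv y \<otimes> x)) = f y * (\<Sum>z\<in>carrier G. h z)" by simp
  qed
  finally show ?thesis by (simp add: sum_distrib_right)
qed

lemma conv_augI_carrier_left: "b \<in> augI t (carrier G) \<Longrightarrow> conv G f b \<in> augI t (carrier G)"
  by (simp add: augI_def sum_conv) (simp add: conv_def)

lemma conv_augI_carrier_right: "a \<in> augI t (carrier G) \<Longrightarrow> conv G a f \<in> augI t (carrier G)"
  by (simp add: augI_def sum_conv) (simp add: conv_def)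

lemma setmul_augI_carrier_right: "setmul G A (augI t (carrier G)) \<subseteq> augI t (carrier G)"
  by (rule setmul_subset[OF ksubspace_augI conv_augI_carrier_left])

lemma setmul_augI_carrier_left: "setmul G (augI t (carrier G)) B \<subseteq> augI t (carrier G)"
  by (rule setmul_subset[OF ksubspace_augI conv_augI_carrier_right])

end

definition delta :: "'g \<Rightarrow> 'g \<Rightarrow> 'k::field" where
  "delta s = (\<lambda>x. if x = s then 1 else 0)"

lemma restrict_mem_kspan_delta:
  "finite A \<Longrightarrow> A \<subseteq> B \<Longrightarrow> (\<lambda>x. if x \<in> A then f x else 0) \<in> kspan (delta ` B)"
proof (induction A rule: finite_induct)
  case empty
  then show ?case by (simp add: zero_fun_def[symmetric] kspan.zero)
next
  case (insert s A)
  have "(\<lambda>x. if x \<in> insert s A then f x else 0) = (\<lambda>x. if x \<in> A then f x else 0) + (\<lambda>x. f s * delta s x)"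
    using insert.hyps(2) by (auto simp: delta_def)
  moreover have "delta s \<in> kspan (delta ` B)"
    using insert.prems by (auto intro: kspan.base)
  then have "(\<lambda>x. f s * delta s x) \<in> kspan (delta ` B)"
    by (rule kspan.smult)
  ultimately show ?case
    using insert by (simp add: kspan.add)
qed

text \<open>The guard keeps the conjugate zero outside the carrier, where the products are meaningless.\<close>
definition conj_by :: "('g, 'b) monoid_scheme \<Rightarrow> 'g \<Rightarrow> ('g \<Rightarrow> 'k::field) \<Rightarrow> 'g \<Rightarrow> 'k" where
  "conj_by G s a = (\<lambda>x. if x \<in> carrier G then a (inv\<^bsub>G\<^esub> s \<otimes>\<^bsub>G\<^esub> x \<otimes>\<^bsub>G\<^esub> s) else 0)"

locale group_algebra = group G for G :: "('g, 'b) monoid_scheme" (structure) +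
  fixes t :: "('g \<Rightarrow> 'k::field) itself"
  assumes finite_carrier: "finite (carrier G)"
begin

abbreviation kG :: "('g \<Rightarrow> 'k) set" where
  "kG \<equiv> grpalg G"

lemma delta_mem_grpalg: "s \<in> carrier G \<Longrightarrow> delta s \<in> kG"
  by (simp add: grpalg_def delta_def)

lemma grpalg_kspan_delta:
  assumes "f \<in> kG"
  shows "f \<in> kspan (delta ` carrier G)"
proof -
  have "(\<lambda>x. if x \<in> carrier G then f x else 0) = f"
    using assms by (auto simp: grpalg_def)
  with restrict_mem_kspan_delta[OF finite_carrier subset_refl, of f] show ?thesis
    by simp
qed

lemma conv_delta_left:
  assumes "s \<in> carrier G" "x \<in> carrier G"
  shows "conv G (delta s) h x = h (inv s \<otimes> x)"
proof -
  have "conv G (delta s) h x = (\<Sum>y\<in>carrier G. if y = s then h (inv s \<otimes> x) else 0)"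
    using assms(2) by (auto simp: conv_def delta_def intro: sum.cong)
  then show ?thesis
    using assms(1) finite_carrier by simp
qed

lemma conv_delta_right:
  assumes "s \<in> carrier G" "x \<in> carrier G"
  shows "conv G h (delta s) x = h (x \<otimes> inv s)"
proof -
  have "inv y \<otimes> x = s \<longleftrightarrow> y = x \<otimes> inv s" if "y \<in> carrier G" for y
    using assms that by (simp add: inv_solve_left' inv_solve_right)
  then have "conv G h (delta s) x = (\<Sum>y\<in>carrier G. if y = x \<otimes> inv s then h (x \<otimes> inv s) else 0)"
    using assms(2) by (auto simp: conv_def delta_def intro: sum.cong)
  then show ?thesis
    using assms finite_carrier by simp
qed

lemma gapow_Suc_0:
  assumes "f \<in> kG"
  shows "gapow G f (Suc 0) = f"
proof (rule ext)
  fix x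
  have "gapow G f (Suc 0) = conv G f (delta \<one>)"
    by (simp add: gone_def delta_def)
  with assms show "gapow G f (Suc 0) x = f x"
    by (cases "x \<in> carrier G") (simp_all add: conv_delta_right conv_outside_carrier grpalg_def)
qed

lemma conv_delta_conj_by:
  assumes "s \<in> carrier G"
  shows "conv G (delta s) a = conv G (conj_by G s a) (delta s)"
proof (rule ext)
  fix x
  show "conv G (delta s) a x = conv G (conj_by G s a) (delta s) x"
    using assms
    by (cases "x \<in> carrier G")
       (simp_all add: conv_delta_left conv_delta_right conv_outside_carrier conj_by_def m_assoc)
qed

lemma conv_conj_by_delta:
  assumes "s \<in> carrier G"
  shows "conv G a (delta s) = conv G (delta s) (conj_by G (inv s) a)"
proof (rule ext)
  fix x
  show "conv G a (delta s) x = conv G (delta s) (conj_by G (inv s) a) x"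
    using assms
    by (cases "x \<in> carrier G")
       (simp_all add: conv_delta_left conv_delta_right conv_outside_carrier conj_by_def m_assoc[symmetric])
qed

end

locale normal_group_algebra = group_algebra +
  fixes N
  assumes normal: "N \<lhd> G"
begin

abbreviation IN where
  "IN \<equiv> augI t N"

abbreviation IG where
  "IG \<equiv> augI t (carrier G)"

abbreviation J where
  "J k \<equiv> Jideal G N t k"

lemma conj_by_mem_augI:
  assumes s: "s \<in> carrier G" and a: "a \<in> IN"
  shows "conj_by G s a \<in> IN"
proof -
  have N_carrier: "N \<subseteq> carrier G"
    using normal normal_imp_subgroup subgroup.subset by blast
  have cancel: "u \<otimes> (inv u \<otimes> x \<otimes> u) \<otimes> inv u = x" "inv u \<otimes> (u \<otimes> x \<otimes> inv u) \<otimes> u = x"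
    if "u \<in> carrier G" "x \<in> carrier G" for u x
    using that by (simp_all add: m_assoc[symmetric]) (simp_all add: m_assoc)
  have "conj_by G s a x = 0" if "x \<notin> N" for x
  proof (cases "x \<in> carrier G")
    case True
    have "inv s \<otimes> x \<otimes> s \<notin> N"
    proof
      assume "inv s \<otimes> x \<otimes> s \<in> N"
      then have "s \<otimes> (inv s \<otimes> x \<otimes> s) \<otimes> inv s \<in> N"
        using normal.inv_op_closed2[OF normal s] by blast
      then show False
        using that s True cancel by simp
    qed
    with a show ?thesis
      by (simp add: conj_by_def augI_def)
  qed (simp add: conj_by_def)
  moreover have "(\<Sum>x\<in>N. conj_by G s a x) = (\<Sum>y\<in>N. a y)"
    by (rule sum.reindex_bij_witness[of _ "\<lambda>y. s \<otimes> y \<otimes> inv s" "\<lambda>x. inv s \<otimes> x \<otimes> s"])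
       (use s N_carrier in \<open>auto simp: conj_by_def cancel
          normal.inv_op_closed1[OF normal] normal.inv_op_closed2[OF normal]\<close>)
  ultimately show ?thesis
    using a by (simp add: augI_def)
qed

lemma kG_mul_augI_subset: "setmul G kG IN \<subseteq> setmul G IN kG"
proof (rule setmul_subset[OF ksubspace_setmul])
  fix g a assume g: "g \<in> kG" and a: "a \<in> IN"
  show "conv G g a \<in> setmul G IN kG"
    by (rule conv_kspan_left[OF grpalg_kspan_delta[OF g] ksubspace_setmul])
       (use a in \<open>clarsimp simp: conv_delta_conj_by setmul_memI conj_by_mem_augI delta_mem_grpalg\<close>)
qed

lemma augI_mul_kG_subset: "setmul G IN kG \<subseteq> setmul G kG IN"
proof (rule setmul_subset[OF ksubspace_setmul])
  fix a g assume a: "a \<in> IN" and g: "g \<in> kG"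
  show "conv G a g \<in> setmul G kG IN"
    by (rule conv_kspan_right[OF grpalg_kspan_delta[OF g] ksubspace_setmul])
       (use a in \<open>clarsimp simp: conv_conj_by_delta setmul_memI conj_by_mem_augI delta_mem_grpalg\<close>)
qed

lemma ksubspace_Jideal: "ksubspace (J (Suc k))"
  by (cases k) (simp_all add: ksubspace_setmul ksubspace_setadd)

lemma augI_mul_Jideal_subset: "setmul G IN (J (Suc k)) \<subseteq> J (Suc (Suc k))"
  using ksubspace_setmul[of G "J (Suc k)" IN] by (simp add: ksubspace_def setadd_upper_left)

lemma Jideal_mul_augI_subset: "setmul G (J (Suc k)) IN \<subseteq> J (Suc (Suc k))"
  using ksubspace_setmul[of G IN "J (Suc k)"] by (simp add: ksubspace_def setadd_upper_right)

lemma kG_mul_Jideal_subset: "setmul G kG (J (Suc k)) \<subseteq> J (Suc k)"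
proof (induction k)
  case 0
  have "setmul G kG (J 1) = setmul G (setmul G kG IN) IG"
    by (simp add: setmul_assoc)
  also have "\<dots> \<subseteq> setmul G (setmul G IN kG) IG"
    by (intro setmul_mono kG_mul_augI_subset subset_refl)
  also have "\<dots> = setmul G IN (setmul G kG IG)"
    by (simp add: setmul_assoc)
  also have "\<dots> \<subseteq> J 1"
    by (simp add: setmul_mono setmul_augI_carrier_right)
  finally show ?case
    by simp
next
  case (Suc k)
  let ?J = "J (Suc k)"
  have "setmul G kG (setmul G IN ?J) = setmul G (setmul G kG IN) ?J"
    by (simp add: setmul_assoc)
  also have "\<dots> \<subseteq> setmul G (setmul G IN kG) ?J"
    by (intro setmul_mono kG_mul_augI_subset subset_refl)
  also have "\<dots> = setmul G IN (setmul G kG ?J)"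
    by (simp add: setmul_assoc)
  also have "\<dots> \<subseteq> setmul G IN ?J"
    by (intro setmul_mono Suc.IH subset_refl)
  finally have first: "setmul G kG (setmul G IN ?J) \<subseteq> setmul G IN ?J" .
  have second: "setmul G kG (setmul G ?J IN) \<subseteq> setmul G ?J IN"
    using setmul_mono[OF Suc.IH subset_refl[of IN], where G = G] by (simp add: setmul_assoc)
  show ?case
    using subset_trans[OF setmul_setadd_right_subset setadd_mono[OF first second]] by simp
qed

lemma Jideal_mul_kG_subset: "setmul G (J (Suc k)) kG \<subseteq> J (Suc k)"
proof (induction k)
  case 0
  show ?case
    by (simp add: setmul_assoc setmul_mono setmul_augI_carrier_left)
next
  case (Suc k)
  let ?J = "J (Suc k)"
  have first: "setmul G (setmul G IN ?J) kG \<subseteq> setmul G IN ?J"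
    using setmul_mono[OF subset_refl[of IN] Suc.IH, where G = G] by (simp add: setmul_assoc)
  have "setmul G (setmul G ?J IN) kG = setmul G ?J (setmul G IN kG)"
    by (simp add: setmul_assoc)
  also have "\<dots> \<subseteq> setmul G ?J (setmul G kG IN)"
    by (intro setmul_mono augI_mul_kG_subset subset_refl)
  also have "\<dots> = setmul G (setmul G ?J kG) IN"
    by (simp add: setmul_assoc)
  also have "\<dots> \<subseteq> setmul G ?J IN"
    by (intro setmul_mono Suc.IH subset_refl)
  finally have second: "setmul G (setmul G ?J IN) kG \<subseteq> setmul G ?J IN" .
  show ?case
    using subset_trans[OF setmul_setadd_left_subset setadd_mono[OF first second]] by simp
qed

lemma kG_mul_setpow_subset:
  "setmul G kG (setpow G IN (Suc m)) \<subseteq> setmul G (setpow G IN (Suc m)) kG"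
proof (induction m)
  case 0
  show ?case
    using kG_mul_augI_subset by simp
next
  case (Suc m)
  let ?P = "setpow G IN (Suc m)"
  have "setmul G kG (setmul G IN ?P) = setmul G (setmul G kG IN) ?P"
    by (simp add: setmul_assoc)
  also have "\<dots> \<subseteq> setmul G (setmul G IN kG) ?P"
    by (intro setmul_mono kG_mul_augI_subset subset_refl)
  also have "\<dots> = setmul G IN (setmul G kG ?P)"
    by (simp add: setmul_assoc)
  also have "\<dots> \<subseteq> setmul G IN (setmul G ?P kG)"
    by (intro setmul_mono Suc.IH subset_refl)
  finally show ?case
    by (simp add: setmul_assoc)
qed

lemma Jideal_mul_setpow_subset:
  "setmul G (J (Suc k)) (setmul G (setpow G IN (Suc m)) kG) \<subseteq> J (Suc k + Suc m)"
proof (induction m arbitrary: k)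
  case 0
  have "setmul G (J (Suc k)) (setmul G IN kG) = setmul G (setmul G (J (Suc k)) IN) kG"
    by (simp add: setmul_assoc)
  also have "\<dots> \<subseteq> setmul G (J (Suc (Suc k))) kG"
    by (intro setmul_mono Jideal_mul_augI_subset subset_refl)
  also have "\<dots> \<subseteq> J (Suc (Suc k))"
    by (rule Jideal_mul_kG_subset)
  finally show ?case
    by simp
next
  case (Suc m)
  let ?P = "setpow G IN (Suc m)"
  have "setmul G (J (Suc k)) (setmul G (setmul G IN ?P) kG)
      = setmul G (setmul G (J (Suc k)) IN) (setmul G ?P kG)"
    by (simp add: setmul_assoc)
  also have "\<dots> \<subseteq> setmul G (J (Suc (Suc k))) (setmul G ?P kG)"
    by (intro setmul_mono Jideal_mul_augI_subset subset_refl)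
  also have "\<dots> \<subseteq> J (Suc (Suc k) + Suc m)"
    by (rule Suc.IH)
  finally show ?case
    by simp
qed

lemma gapow_mem_setpow:
  assumes x: "x \<in> setmul G IN kG"
  shows "gapow G x (Suc m) \<in> setmul G (setpow G IN (Suc m)) kG"
proof (induction m)
  case 0
  have "x \<in> kG"
    using x setmul_subset_grpalg by blast
  with x show ?case
    by (simp only: gapow_Suc_0 setpow.simps)
next
  case (Suc m)
  let ?P = "setpow G IN (Suc m)"
  have "gapow G x (Suc (Suc m)) \<in> setmul G (setmul G IN kG) (setmul G ?P kG)"
    using x Suc.IH by (simp add: setmul_memI)
  also have "\<dots> = setmul G IN (setmul G (setmul G kG ?P) kG)"
    by (simp add: setmul_assoc)
  also have "\<dots> \<subseteq> setmul G IN (setmul G (setmul G ?P kG) kG)"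
    by (intro setmul_mono kG_mul_setpow_subset subset_refl)
  also have "\<dots> = setmul G IN (setmul G ?P (setmul G kG kG))"
    by (simp add: setmul_assoc)
  also have "\<dots> \<subseteq> setmul G IN (setmul G ?P kG)"
    by (intro setmul_mono setmul_subset_grpalg subset_refl)
  finally show ?case
    by (simp add: setmul_assoc)
qed

lemma gapow_diff_mem_Jideal:
  assumes x: "x \<in> setmul G IN kG" and y: "y \<in> setmul G IN kG"
    and xy: "x - y \<in> setmul G IN IG"
  shows "gapow G x (Suc m) - gapow G y (Suc m) \<in> J (Suc m)"
proof (induction m)
  case 0
  have "x \<in> kG" "y \<in> kG"
    using x y setmul_subset_grpalg by blast+
  with xy show ?case
    by (simp only: gapow_Suc_0 Jideal.simps)
next
  case (Suc m)
  let ?X = "gapow G x (Suc m)" and ?Y = "gapow G y (Suc m)"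
  have "conv G x (?X - ?Y) \<in> setmul G (setmul G IN kG) (J (Suc m))"
    using x Suc.IH by (rule setmul_memI)
  also have "\<dots> = setmul G IN (setmul G kG (J (Suc m)))"
    by (simp add: setmul_assoc)
  also have "\<dots> \<subseteq> setmul G IN (J (Suc m))"
    by (intro setmul_mono kG_mul_Jideal_subset subset_refl)
  also have "\<dots> \<subseteq> J (Suc (Suc m))"
    by (rule augI_mul_Jideal_subset)
  finally have "conv G x (?X - ?Y) \<in> J (Suc (Suc m))" .
  moreover have "conv G (x - y) ?Y \<in> J (Suc (Suc m))"
    using Jideal_mul_setpow_subset[of 0 m] setmul_memI[OF xy gapow_mem_setpow[OF y, of m]] by auto
  moreover have "gapow G x (Suc (Suc m)) - gapow G y (Suc (Suc m))
      = conv G x (?X - ?Y) + conv G (x - y) ?Y"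
    by (simp add: conv_diff_left conv_diff_right)
  ultimately show ?case
    using ksubspace_add[OF ksubspace_Jideal] by metis
qed

end

theorem mainTheorem7:
  fixes G :: "'g monoid" and N :: "'g set" and p :: nat and n :: nat
    and t :: "('g \<Rightarrow> 'k::field) itself"
  assumes "group G" and "finite (carrier G)" and "Factorial_Ring.prime p"
    and "\<exists>a. card (carrier G) = p ^ a"
    and "N \<lhd> G"
    and "card (UNIV :: 'k set) = p"
  shows "(\<forall>x\<in>setmul G (augI t N) (grpalg G).
           gapow G x (p ^ n) \<in> setmul G (setpow G (augI t N) (p ^ n)) (grpalg G)) \<and>
         (\<forall>x\<in>setmul G (augI t N) (grpalg G). \<forall>y\<in>setmul G (augI t N) (grpalg G).
           x - y \<in> setmul G (augI t N) (augI t (carrier G)) \<longrightarrow>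
           gapow G x (p ^ n) - gapow G y (p ^ n) \<in> Jideal G N t (p ^ n))"
proof -
  interpret normal_group_algebra G t N
    using assms(1,2,5)
    by (simp add: normal_group_algebra_def normal_group_algebra_axioms_def
        group_algebra_def group_algebra_axioms_def)
  have "p ^ n > 0"
    using assms(3) prime_gt_0_nat by simp
  then obtain m where m: "p ^ n = Suc m"
    using gr0_implies_Suc by blast
  show ?thesis
    unfolding m using gapow_mem_setpow gapow_diff_mem_Jideal by blast
qed

end
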